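(* Let $q\geq 1$ and let $M$ be a graph of odd-girth $\ell+2$. Then $\mu^q(M)$ has odd-girth $\ell+2$.
   Context: The odd-girth of a graph is the length of a shortest odd cycle. For a graph $M$ and integer $q\geq1$, $\mu^q(M)$ is the graph obtained from $M$ (whose vertices $v$ are also written $v^0$, with the edges of $M$ kept) by adding, for each vertex $v$ of $M$, new vertices $v^1,\dots,v^q$, and for each $1\leq i\leq q$ joining $v^i$ to $w^{i-1}$ (and, for $i<q$, to $w^{i+1}$) whenever $vw$ is an edge of $M$. *)

theory Defs
  imports Main
begin

definition simple_graph :: "'a set \<Rightarrow> ('a \<Rightarrow> 'a \<Rightarrow> bool) \<Rightarrow> bool" where
  "simple_graph V E \<longleftrightarrow> finite V \<and> (\<forall>x y. E x y \<longrightarrow> x \<in> V \<and> y \<in> V)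
     \<and> (\<forall>x y. E x y \<longrightarrow> E y x) \<and> (\<forall>x. \<not> E x x)"

definition is_cycle :: "'a set \<Rightarrow> ('a \<Rightarrow> 'a \<Rightarrow> bool) \<Rightarrow> 'a list \<Rightarrow> bool" where
  "is_cycle V E xs \<longleftrightarrow> 3 \<le> length xs \<and> distinct xs \<and> set xs \<subseteq> V
     \<and> (\<forall>i < length xs. E (xs ! i) (xs ! ((i + 1) mod length xs)))"

definition has_odd_girth :: "'a set \<Rightarrow> ('a \<Rightarrow> 'a \<Rightarrow> bool) \<Rightarrow> nat \<Rightarrow> bool" where
  "has_odd_girth V E k \<longleftrightarrow>
     (\<exists>xs. is_cycle V E xs \<and> odd (length xs) \<and> length xs = k)
     \<and> (\<forall>xs. is_cycle V E xs \<and> odd (length xs) \<longrightarrow> k \<le> length xs)"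

text \<open>The graph mu^q(M): vertex v^i is represented as (v, i), with v^0 = v.\<close>
definition mu_V :: "nat \<Rightarrow> 'a set \<Rightarrow> ('a \<times> nat) set" where
  "mu_V q V = V \<times> {0..q}"

definition mu_E :: "nat \<Rightarrow> ('a \<Rightarrow> 'a \<Rightarrow> bool) \<Rightarrow> ('a \<times> nat) \<Rightarrow> ('a \<times> nat) \<Rightarrow> bool" where
  "mu_E q E x y \<longleftrightarrow> (case (x, y) of ((v, i), (w, j)) \<Rightarrow>
      i \<le> q \<and> j \<le> q \<and> E v w \<and> ((i = 0 \<and> j = 0) \<or> j = i + 1 \<or> i = j + 1))"

end

theory Submission
  imports Defs
begin

text \<open>The projection (v, i) \<mapsto> v is a homomorphism from \<open>\<mu>\<^sup>q(M)\<close> onto M and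
  v \<mapsto> (v, 0) is an injective homomorphism back. An odd cycle of \<open>\<mu>\<^sup>q(M)\<close> projects to
  an odd closed walk of M, which contains an odd cycle no longer than itself; conversely
  every cycle of M is a cycle of \<open>\<mu>\<^sup>q(M)\<close>.\<close>

definition closed_walk :: "('a \<Rightarrow> 'a \<Rightarrow> bool) \<Rightarrow> 'a list \<Rightarrow> bool" where
  "closed_walk E xs \<longleftrightarrow> xs \<noteq> [] \<and> (\<forall>i < length xs. E (xs ! i) (xs ! ((i + 1) mod length xs)))"

lemma is_cycle_imp_closed_walk: "is_cycle V E xs \<Longrightarrow> closed_walk E xs"
  by (auto simp: is_cycle_def closed_walk_def)

lemma closed_walk_map:
  assumes "closed_walk E xs" and "\<And>x y. E x y \<Longrightarrow> F (f x) (f y)"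
  shows "closed_walk F (map f xs)"
proof -
  have "(i + 1) mod length xs < length xs" if "i < length xs" for i
    using that by (intro mod_less_divisor) auto
  with assms show ?thesis by (auto simp: closed_walk_def)
qed

lemma is_cycle_map:
  assumes "is_cycle V E xs" and "inj_on f V" and "f ` V \<subseteq> W"
    and "\<And>x y. E x y \<Longrightarrow> F (f x) (f y)"
  shows "is_cycle W F (map f xs)"
proof -
  have "closed_walk F (map f xs)"
    using closed_walk_map[OF is_cycle_imp_closed_walk[OF assms(1)]] assms(4) .
  moreover have "distinct (map f xs)"
    using assms(1,2) by (auto simp: is_cycle_def distinct_map intro: inj_on_subset)
  ultimately show ?thesis using assms(1,3) by (auto simp: is_cycle_def closed_walk_def)
qed

lemma closed_walk_rotate:
  assumes "closed_walk E xs" shows "closed_walk E (rotate k xs)"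
proof -
  let ?n = "length xs"
  have n: "?n > 0" using assms by (auto simp: closed_walk_def)
  have "E (rotate k xs ! m) (rotate k xs ! ((m + 1) mod ?n))" if m: "m < ?n" for m
  proof -
    have "E (xs ! ((m + k) mod ?n)) (xs ! (((m + k) mod ?n + 1) mod ?n))"
      using assms n unfolding closed_walk_def by simp
    moreover have "((m + 1) mod ?n + k) mod ?n = ((m + k) mod ?n + 1) mod ?n"
      by (simp add: mod_simps add.commute add.left_commute)
    ultimately show ?thesis using m n by (simp add: nth_rotate add.commute)
  qed
  then show ?thesis using assms by (auto simp: closed_walk_def)
qed

lemma closed_walk_take:
  assumes "closed_walk E xs" "0 < d" "d < length xs" "xs ! 0 = xs ! d"
  shows "closed_walk E (take d xs)"
proof -
  have "E (take d xs ! m) (take d xs ! ((m + 1) mod d))" if m: "m < d" for m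
  proof -
    have "(m + 1) mod length xs = m + 1" using m assms(3) by simp
    then have edge: "E (xs ! m) (xs ! (m + 1))"
      using assms(1,3) m unfolding closed_walk_def by (metis less_trans)
    show ?thesis
    proof (cases "m + 1 < d")
      case True
      then show ?thesis using edge m by simp
    next
      case False
      then have "m + 1 = d" using m by simp
      then show ?thesis using edge assms(2,4) by simp
    qed
  qed
  then show ?thesis using assms(2,3) by (auto simp: closed_walk_def)
qed

lemma closed_walk_drop:
  assumes "closed_walk E xs" "0 < d" "d < length xs" "xs ! 0 = xs ! d"
  shows "closed_walk E (drop d xs)"
proof -
  let ?n = "length xs"
  have "E (drop d xs ! m) (drop d xs ! ((m + 1) mod (?n - d)))" if m: "m < ?n - d" for m
  proof -
    have edge: "E (xs ! (d + m)) (xs ! ((d + m + 1) mod ?n))"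
      using assms(1) m unfolding closed_walk_def by simp
    show ?thesis
    proof (cases "m + 1 < ?n - d")
      case True
      then show ?thesis using edge m by simp
    next
      case False
      then have "d + m + 1 = ?n" "m + 1 = ?n - d" using m by simp_all
      then show ?thesis using edge assms(3,4) m by simp
    qed
  qed
  then show ?thesis using assms(3) by (auto simp: closed_walk_def)
qed

text \<open>Splitting a closed walk at a repeated vertex gives two shorter closed walks whose
  lengths add up to the original length, so one of them is odd if the walk is.\<close>

lemma odd_closed_walk_contains_odd_cycle:
  assumes irrefl: "\<And>x. \<not> E x x"
  shows "odd (length xs) \<Longrightarrow> closed_walk E xs \<Longrightarrow> set xs \<subseteq> V \<Longrightarrow>
    \<exists>ys. is_cycle V E ys \<and> odd (length ys) \<and> length ys \<le> length xs"
proof (induction "length xs" arbitrary: xs rule: less_induct)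
  case less
  show ?case
  proof (cases "distinct xs")
    case True
    have "length xs \<noteq> 1"
    proof
      assume "length xs = 1"
      then obtain x where "xs = [x]" by (auto simp: length_Suc_conv)
      then show False using less.prems irrefl by (auto simp: closed_walk_def)
    qed
    then have "3 \<le> length xs" using less.prems(1) by presburger
    then have "is_cycle V E xs"
      using True less.prems unfolding is_cycle_def closed_walk_def by auto
    then show ?thesis using less.prems by blast
  next
    case False
    then obtain i j where ij: "i < j" "j < length xs" "xs ! i = xs ! j"
      by (metis distinct_conv_nth linorder_neqE_nat)
    define ys where "ys = rotate i xs"
    define d where "d = j - i"
    have len: "length ys = length xs" by (simp add: ys_def)
    have d: "0 < d" "d < length ys" using ij len by (auto simp: d_def)
    have "ys ! 0 = xs ! i" "ys ! d = xs ! j"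
      using ij nth_rotate[of 0 xs i] nth_rotate[of d xs i] d len
      by (auto simp: ys_def d_def simp del: length_greater_0_conv)
    then have "ys ! 0 = ys ! d" using ij(3) by simp
    moreover have walk: "closed_walk E ys"
      using less.prems(2) closed_walk_rotate ys_def by blast
    ultimately have walks: "closed_walk E (take d ys)" "closed_walk E (drop d ys)"
      using closed_walk_take closed_walk_drop d by blast+
    have sets: "set (take d ys) \<subseteq> V" "set (drop d ys) \<subseteq> V"
      using less.prems(3) set_take_subset set_drop_subset unfolding ys_def by fastforce+
    show ?thesis
    proof (cases "odd d")
      case True
      then show ?thesis
        using less.hyps[of "take d ys"] d len walks(1) sets(1) by fastforce
    next
      case False
      then have "odd (length xs - d)" using less.prems(1) d len by auto
      then show ?thesis
        using less.hyps[of "drop d ys"] d len walks(2) sets(2) by fastforce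
    qed
  qed
qed

lemma has_odd_girth_transfer:
  assumes girth: "has_odd_girth V E k" and irrefl: "\<And>x. \<not> E x x"
    and f: "f ` W \<subseteq> V" "\<And>x y. F x y \<Longrightarrow> E (f x) (f y)"
    and g: "inj_on g V" "g ` V \<subseteq> W" "\<And>x y. E x y \<Longrightarrow> F (g x) (g y)"
  shows "has_odd_girth W F k"
proof -
  obtain xs where xs: "is_cycle V E xs" "odd (length xs)" "length xs = k"
    using girth by (auto simp: has_odd_girth_def)
  have "is_cycle W F (map g xs)" by (rule is_cycle_map[OF xs(1) g(1,2)]) (rule g(3))
  moreover have "k \<le> length zs" if zs: "is_cycle W F zs" "odd (length zs)" for zs
  proof -
    have "closed_walk E (map f zs)"
      using closed_walk_map[OF is_cycle_imp_closed_walk[OF zs(1)]] f(2) .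
    moreover have "set (map f zs) \<subseteq> V" using zs(1) f(1) by (auto simp: is_cycle_def)
    ultimately obtain ys where "is_cycle V E ys" "odd (length ys)" "length ys \<le> length zs"
      using odd_closed_walk_contains_odd_cycle[of E "map f zs" V, OF irrefl] zs(2) by auto
    then show ?thesis using girth unfolding has_odd_girth_def by fastforce
  qed
  ultimately show ?thesis using xs unfolding has_odd_girth_def by force
qed

lemma mu_E_imp_E: "mu_E q E x y \<Longrightarrow> E (fst x) (fst y)"
  by (auto simp: mu_E_def split: prod.splits)

lemma mu_E_base: "E v w \<Longrightarrow> mu_E q E (v, 0) (w, 0)"
  by (simp add: mu_E_def)

theorem lemma5:
  fixes V :: "'a set" and E :: "'a \<Rightarrow> 'a \<Rightarrow> bool" and q l :: nat
  assumes "simple_graph V E"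
    and "q \<ge> 1"
    and "has_odd_girth V E (l + 2)"
  shows "has_odd_girth (mu_V q V) (mu_E q E) (l + 2)"
proof (rule has_odd_girth_transfer[OF assms(3), where f = fst and g = "\<lambda>v. (v, 0)"])
  show "\<And>x. \<not> E x x" using assms(1) by (simp add: simple_graph_def)
  show "fst ` mu_V q V \<subseteq> V" "(\<lambda>v. (v, 0)) ` V \<subseteq> mu_V q V"
    by (auto simp: mu_V_def)
  show "inj_on (\<lambda>v. (v, 0::nat)) V" by (simp add: inj_on_def)
qed (simp_all add: mu_E_imp_E mu_E_base)

end
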